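(* For every $x>1$, $1-[R^-(x)]^2<[R^+(x)]^2-1$. Consequently, for every $c>1$ and every $\sin^{-1}(\frac1c)\le\psi_1<\psi_2\le\pi-\sin^{-1}(\frac1c)$, \[\int_{\psi_1}^{\psi_2}\frac{d\psi}{1-[R^-(c\sin\psi)]^2}>\int_{\psi_1}^{\psi_2}\frac{d\psi}{[R^+(c\sin\psi)]^2-1}.\]
   Context: Let $K(R)=\frac{\exp(\frac{R^2-1}{2})}{R}$ for $R>0$; $K$ is strictly decreasing on $(0,1]$, strictly increasing on $[1,\infty)$ with $K(1)=1$. For $s\ge1$ let $R^-(s)\in(0,1]$ and $R^+(s)\in[1,\infty)$ be the two solutions of $K(R)=s$. *)

theory Defs
  imports "HOL-Analysis.Analysis"
begin

definition K :: "real \<Rightarrow> real" where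
  "K R = exp ((R\<^sup>2 - 1) / 2) / R"

text \<open>For s \<ge> 1: the two solutions of K R = s, one in (0,1], one in [1,\<infinity>).\<close>
definition Rminus :: "real \<Rightarrow> real" where
  "Rminus s = (THE R. 0 < R \<and> R \<le> 1 \<and> K R = s)"

definition Rplus :: "real \<Rightarrow> real" where
  "Rplus s = (THE R. 1 \<le> R \<and> K R = s)"

end

theory Submission
  imports Defs
begin

(* With Phi u = u - 1 - ln u we have 2 ln K(R) = Phi(R^2), so a = R^-(x)^2 and b = R^+(x)^2
   are the two solutions of Phi = 2 ln x on either side of the minimum of Phi at 1.  The
   first claim, b > 2 - a, is Phi(2 - p) < Phi(p) for 0 < p < 1: Phi is steeper to the left
   of its minimum.  Integrating this pointwise inequality gives the second claim, provided
   the left integrand is integrable (otherwise its Lebesgue integral would be 0).  It blows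
   up like 1/sqrt(ln(c sin psi)) at the turning points arcsin(1/c) and pi - arcsin(1/c), and
   ln(c sin psi) grows at least linearly in the distance to them, so the integrand is
   dominated by 2 + sqrt 18 / sqrt((psi - arcsin(1/c)) (pi - arcsin(1/c) - psi)), which has
   the antiderivative arcsin of an affine function. *)

section \<open>The two branches of the inverse of K\<close>

definition Phi :: "real \<Rightarrow> real" where
  "Phi u = u - 1 - ln u"

lemma ln_K: "0 < R \<Longrightarrow> 2 * ln (K R) = Phi (R\<^sup>2)"
  by (simp add: K_def Phi_def ln_div ln_realpow field_simps)

lemma K_pos: "0 < R \<Longrightarrow> 0 < K R"
  by (simp add: K_def)

lemma K_one [simp]: "K 1 = 1"
  by (simp add: K_def)

lemma isCont_K: "0 < R \<Longrightarrow> isCont K R"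
  unfolding K_def by (intro continuous_intros) auto

lemma DERIV_Phi: "0 < u \<Longrightarrow> DERIV Phi u :> 1 - 1 / u"
  unfolding Phi_def by (auto intro!: derivative_eq_intros)

lemma continuous_on_Phi: "0 < a \<Longrightarrow> continuous_on {a..b} Phi"
  unfolding Phi_def by (intro continuous_intros) auto

lemma Phi_strict_antimono:
  assumes "0 < u" "u < v" "v \<le> 1"
  shows "Phi v < Phi u"
proof (rule DERIV_neg_imp_decreasing_open[where f = Phi])
  fix x assume "u < x" "x < v"
  then show "\<exists>y. DERIV Phi x :> y \<and> y < 0"
    using assms by (intro exI[of _ "1 - 1 / x"] conjI DERIV_Phi) (auto simp: field_simps)
qed (use assms continuous_on_Phi in auto)

lemma Phi_strict_mono:
  assumes "1 \<le> u" "u < v"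
  shows "Phi u < Phi v"
proof (rule DERIV_pos_imp_increasing_open[where f = Phi])
  fix x assume "u < x" "x < v"
  then show "\<exists>y. DERIV Phi x :> y \<and> y > 0"
    using assms by (intro exI[of _ "1 - 1 / x"] conjI DERIV_Phi) (auto simp: field_simps)
qed (use assms continuous_on_Phi in auto)

lemma K_strict_antimono:
  assumes "0 < R" "R < R'" "R' \<le> 1"
  shows "K R' < K R"
proof -
  have "Phi (R'\<^sup>2) < Phi (R\<^sup>2)"
    using assms by (intro Phi_strict_antimono) (auto intro: power_strict_mono power_le_one)
  then have "ln (K R') < ln (K R)"
    using assms ln_K[of R] ln_K[of R'] by simp
  then show ?thesis
    using assms K_pos[of R] K_pos[of R'] by simp
qed

lemma K_strict_mono:
  assumes "1 \<le> R" "R < R'"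
  shows "K R < K R'"
proof -
  have "Phi (R\<^sup>2) < Phi (R'\<^sup>2)"
    using assms by (intro Phi_strict_mono) (auto intro: power_strict_mono one_le_power)
  then have "ln (K R) < ln (K R')"
    using assms ln_K[of R] ln_K[of R'] by simp
  then show ?thesis
    using assms K_pos[of R] K_pos[of R'] by simp
qed

lemma Rminus_K:
  assumes "0 < R" "R \<le> 1"
  shows "Rminus (K R) = R"
  unfolding Rminus_def
proof (rule the_equality)
  fix R' assume "0 < R' \<and> R' \<le> 1 \<and> K R' = K R"
  then show "R' = R"
    using assms K_strict_antimono[of R R'] K_strict_antimono[of R' R]
    by (cases R R' rule: linorder_cases) auto
qed (use assms in auto)

lemma Rplus_K:
  assumes "1 \<le> R"
  shows "Rplus (K R) = R"
  unfolding Rplus_def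
proof (rule the_equality)
  fix R' assume "1 \<le> R' \<and> K R' = K R"
  then show "R' = R"
    using assms K_strict_mono[of R R'] K_strict_mono[of R' R]
    by (cases R R' rule: linorder_cases) auto
qed (use assms in auto)

lemma K_surj_lower:
  assumes "1 \<le> s"
  obtains R where "0 < R" "R \<le> 1" "K R = s"
proof -
  define r where "r = exp (-1/2) / s"
  have "0 < r" "r \<le> 1"
    using assms order_trans[of "exp (-1/2)" 1 s] by (auto simp: r_def)
  moreover have "s \<le> K r"
    using \<open>0 < r\<close> assms by (simp add: K_def r_def field_simps)
  ultimately obtain R where "r \<le> R" "R \<le> 1" "K R = s"
    using IVT2[of K 1 s r] assms isCont_K by force
  with \<open>0 < r\<close> show thesis
    by (intro that) auto
qed

lemma K_surj_upper:
  assumes "1 \<le> s"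
  obtains R where "1 \<le> R" "K R = s"
proof -
  have "s * (2 * s) \<le> 1 + ((2 * s)\<^sup>2 - 1) / 2"
    by (simp add: power2_eq_square field_simps)
  also have "\<dots> \<le> exp (((2 * s)\<^sup>2 - 1) / 2)"
    by (rule exp_ge_add_one_self)
  finally have "s \<le> K (2 * s)"
    using assms by (simp add: K_def field_simps)
  then show thesis
    using IVT[of K 1 s "2 * s"] assms isCont_K that by force
qed

lemma Rminus_root:
  assumes "1 \<le> s"
  shows "0 < Rminus s" "Rminus s \<le> 1" "K (Rminus s) = s"
  using K_surj_lower[OF assms] Rminus_K by metis+

lemma Rplus_root:
  assumes "1 \<le> s"
  shows "1 \<le> Rplus s" "K (Rplus s) = s"
  using K_surj_upper[OF assms] Rplus_K by metis+

lemma Rminus_less_one: "1 < s \<Longrightarrow> Rminus s < 1"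
  using Rminus_root[of s] by (metis K_one order.order_iff_strict less_imp_le)

lemma one_less_Rplus: "1 < s \<Longrightarrow> 1 < Rplus s"
  using Rplus_root[of s] by (metis K_one order.order_iff_strict less_imp_le)

lemma isCont_Rminus:
  assumes "1 < s"
  shows "isCont Rminus s"
proof -
  define R where "R = Rminus s"
  have R: "0 < R" "R < 1" "K R = s"
    using Rminus_root[of s] Rminus_less_one[of s] assms by (auto simp: R_def)
  have "isCont Rminus (K R)"
  proof (rule isCont_inverse_function[where f = K and d = "min R (1 - R) / 2"])
    fix z assume "\<bar>z - R\<bar> \<le> min R (1 - R) / 2"
    then have "0 < z" "z < 1"
      using R unfolding abs_le_iff min_def by (auto simp: field_simps split: if_splits)
    then show "Rminus (K z) = z" "isCont K z"
      using Rminus_K isCont_K by auto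
  qed (use R in auto)
  then show ?thesis
    using R by simp
qed

lemma isCont_Rplus:
  assumes "1 < s"
  shows "isCont Rplus s"
proof -
  define R where "R = Rplus s"
  have R: "1 < R" "K R = s"
    using Rplus_root[of s] one_less_Rplus[of s] assms by (auto simp: R_def)
  have "isCont Rplus (K R)"
  proof (rule isCont_inverse_function[where f = K and d = "(R - 1) / 2"])
    fix z assume "\<bar>z - R\<bar> \<le> (R - 1) / 2"
    then have "1 < z"
      using R unfolding abs_le_iff by (simp add: field_simps)
    then show "Rplus (K z) = z" "isCont K z"
      using Rplus_K isCont_K by auto
  qed (use R in auto)
  then show ?thesis
    using R by simp
qed

section \<open>The pointwise inequality\<close>

lemma Phi_reflect_less:
  assumes "0 < p" "p < 1"
  shows "Phi (2 - p) < Phi p"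
proof -
  define h where "h x = Phi x - Phi (2 - x)" for x
  have "h 1 < h p"
  proof (rule DERIV_neg_imp_decreasing_open[where f = h])
    fix x assume x: "p < x" "x < 1"
    have "DERIV h x :> 2 - 1 / x - 1 / (2 - x)"
      unfolding h_def Phi_def using x assms
      by (auto intro!: derivative_eq_intros simp: field_simps)
    moreover have "0 < (1 - x)\<^sup>2"
      using x by simp
    then have "x * (2 - x) < 1"
      by (simp add: power2_eq_square algebra_simps)
    then have "2 - 1 / x - 1 / (2 - x) < 0"
      using x assms by (simp add: field_simps)
    ultimately show "\<exists>y. DERIV h x :> y \<and> y < 0"
      by blast
  next
    show "continuous_on {p..1} h"
      unfolding h_def Phi_def using assms by (intro continuous_intros) auto
  qed (use assms in auto)
  then show ?thesis
    by (simp add: h_def Phi_def)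
qed

lemma Rminus_Rplus_gap:
  assumes "1 < s"
  shows "1 - (Rminus s)\<^sup>2 < (Rplus s)\<^sup>2 - 1"
proof -
  define a b where "a = Rminus s" and "b = Rplus s"
  have a: "0 < a" "a < 1" "K a = s" and b: "1 < b" "K b = s"
    using Rminus_root[of s] Rminus_less_one[of s] Rplus_root[of s] one_less_Rplus[of s] assms
    by (auto simp: a_def b_def)
  have "0 < a\<^sup>2" "a\<^sup>2 < 1" "1 < b\<^sup>2"
    using a b by (auto simp: power_less_one_iff)
  have "Phi (a\<^sup>2) = Phi (b\<^sup>2)"
    using ln_K[of a] ln_K[of b] a b by simp
  moreover have "Phi (2 - a\<^sup>2) < Phi (a\<^sup>2)"
    using Phi_reflect_less \<open>0 < a\<^sup>2\<close> \<open>a\<^sup>2 < 1\<close> .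
  ultimately have "\<not> b\<^sup>2 \<le> 2 - a\<^sup>2"
    using Phi_strict_mono[of "b\<^sup>2" "2 - a\<^sup>2"] \<open>1 < b\<^sup>2\<close>
    by (cases "b\<^sup>2 = 2 - a\<^sup>2") auto
  then show ?thesis
    by (simp add: a_def b_def)
qed

lemma set_integral_strict_mono:
  fixes f g :: "'a \<Rightarrow> real"
  assumes "set_integrable M A f" "set_integrable M A g"
    and "A \<in> sets M" "emeasure M A \<noteq> 0"
    and less: "\<And>x. x \<in> A \<Longrightarrow> f x < g x"
  shows "(LINT x:A|M. f x) < (LINT x:A|M. g x)"
proof -
  define h where "h x = indicator A x * (g x - f x)" for x
  have int: "integrable M h"
    using set_integral_diff(1)[OF assms(2,1)] unfolding h_def set_integrable_def by simp
  have nonneg: "AE x in M. 0 \<le> h x"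
    using less by (intro AE_I2) (auto simp: h_def indicator_def less_imp_le)
  have "integral\<^sup>L M h \<noteq> 0"
  proof
    assume "integral\<^sup>L M h = 0"
    then have "AE x in M. h x = 0"
      using integral_nonneg_eq_0_iff_AE[OF int nonneg] by simp
    then have "AE x in M. x \<notin> A"
      by eventually_elim (auto simp: h_def dest: less)
    then show False
      using assms(3,4) sets.sets_into_space[OF assms(3)] AE_iff_measurable[of A M "\<lambda>x. x \<notin> A"]
      by auto
  qed
  moreover have "0 \<le> integral\<^sup>L M h"
    using nonneg by (rule integral_nonneg_AE)
  moreover have "integral\<^sup>L M h = (LINT x:A|M. g x) - (LINT x:A|M. f x)"
    using set_integral_diff(2)[OF assms(2,1)] unfolding h_def set_lebesgue_integral_def by simp
  ultimately show ?thesis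
    by linarith
qed

lemma set_borel_measurable_isCont:
  fixes f :: "'a::euclidean_space \<Rightarrow> 'b::euclidean_space"
  assumes "open S" "\<And>x. x \<in> S \<Longrightarrow> isCont f x"
  shows "set_borel_measurable lborel S f"
  unfolding set_borel_measurable_def using assms
  by (auto intro!: borel_measurable_continuous_on_indicator continuous_at_imp_continuous_on)

lemma set_integrable_const_Ioo:
  fixes a b c :: real
  shows "set_integrable lborel {a<..<b} (\<lambda>_. c)"
  unfolding set_integrable_def using emeasure_lborel_box_finite[of a b]
  by (intro integrable_scaleR_left integrable_real_indicator) auto

lemma set_integrable_inverse_sqrt_Ioo:
  fixes a b :: real
  assumes "a < b"
  shows "set_integrable lborel {a<..<b} (\<lambda>x. 1 / sqrt ((x - a) * (b - x)))"
proof -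
  define F where "F x = arcsin ((2 * x - a - b) / (b - a))" for x
  have "continuous_on {a..b} F"
    unfolding F_def using assms by (intro continuous_intros) (auto simp: field_simps)
  have "set_integrable lborel (einterval a b) (\<lambda>x. 1 / sqrt ((x - a) * (b - x)))"
  proof (rule interval_integral_FTC_nonneg(1)[where F = F and A = "F a" and B = "F b"])
    fix x assume "ereal a < ereal x" "ereal x < ereal b"
    then have x: "a < x" "x < b"
      by auto
    define u where "u = (2 * x - a - b) / (b - a)"
    have "-1 < u" "u < 1"
      using x by (auto simp: u_def field_simps)
    have "1 - u\<^sup>2 = 4 * ((x - a) * (b - x)) / (b - a)\<^sup>2"
      using x by (simp add: u_def field_simps) (simp add: power2_eq_square algebra_simps)
    also have "\<dots> = (2 * sqrt ((x - a) * (b - x)) / (b - a))\<^sup>2"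
      using x by (simp add: power_divide power_mult_distrib)
    finally have "sqrt (1 - u\<^sup>2) = 2 * sqrt ((x - a) * (b - x)) / (b - a)"
      using x by simp
    moreover have "DERIV (\<lambda>x. 2 * x - a - b) x :> 2"
      by (auto intro!: derivative_eq_intros)
    then have linear: "DERIV (\<lambda>x. (2 * x - a - b) / (b - a)) x :> 2 / (b - a)"
      by (rule DERIV_cdivide)
    have "DERIV F x :> inverse (sqrt (1 - u\<^sup>2)) * (2 / (b - a))"
      unfolding F_def using \<open>-1 < u\<close> \<open>u < 1\<close>
      by (intro DERIV_chain2[OF _ linear]) (simp add: u_def DERIV_arcsin)
    ultimately show "DERIV F x :> 1 / sqrt ((x - a) * (b - x))"
      using x by (simp add: field_simps)
  next
    fix x assume "ereal a < ereal x" "ereal x < ereal b"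
    then show "isCont (\<lambda>x. 1 / sqrt ((x - a) * (b - x))) x"
      by (intro continuous_intros) auto
  next
    show "((F \<circ> real_of_ereal) \<longlongrightarrow> F a) (at_right (ereal a))"
      unfolding ereal_tendsto_simps1 using continuous_on_Icc_at_rightD[OF \<open>continuous_on {a..b} F\<close> assms] .
    show "((F \<circ> real_of_ereal) \<longlongrightarrow> F b) (at_left (ereal b))"
      unfolding ereal_tendsto_simps1 using continuous_on_Icc_at_leftD[OF \<open>continuous_on {a..b} F\<close> assms] .
  qed (use assms in auto)
  then show ?thesis
    by simp
qed

section \<open>Integrability near the turning points\<close>

lemma inverse_one_minus_Rminus_sq_le:
  assumes "1 < s"
  shows "1 / (1 - (Rminus s)\<^sup>2) \<le> 2 + 1 / sqrt (ln s)"
proof -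
  define t where "t = 1 - (Rminus s)\<^sup>2"
  have "0 < t" "t < 1"
    using Rminus_root[of s] Rminus_less_one[of s] assms by (auto simp: t_def power_less_one_iff)
  have Phi_t: "Phi (1 - t) = 2 * ln s"
    using ln_K[of "Rminus s"] Rminus_root[of s] assms by (simp add: t_def)
  have "0 < ln s"
    using assms by simp
  show ?thesis
  proof (cases "t \<le> 1/2")
    case True
    then have "- t - 2 * t\<^sup>2 \<le> ln (1 - t)"
      using ln_one_minus_pos_lower_bound[of t] \<open>0 < t\<close> by simp
    then have "sqrt (ln s) \<le> t"
      using Phi_t \<open>0 < t\<close> by (simp add: Phi_def real_le_lsqrt)
    then have "1 / t \<le> 1 / sqrt (ln s)"
      using \<open>0 < ln s\<close> by (simp add: frac_le)
    then show ?thesis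
      using \<open>0 < ln s\<close> by (simp add: t_def)
  next
    case False
    then have "1 / t \<le> 2"
      using \<open>0 < t\<close> by (simp add: field_simps)
    then show ?thesis
      using \<open>0 < ln s\<close> by (simp add: t_def add_increasing2)
  qed
qed

lemma sin_ge_third:
  assumes "0 \<le> y" "y \<le> pi / 2"
  shows "y / 3 \<le> sin y"
proof -
  have "\<bar>sin y - y\<bar> \<le> y ^ 3 / 6"
    using Maclaurin_sin_bound[of y 3] assms by (simp add: sin_coeff_def eval_nat_numeral)
  moreover have "y\<^sup>2 \<le> 2\<^sup>2"
    using assms pi_less_4 by (intro power_mono) auto
  then have "y ^ 3 \<le> 4 * y"
    using assms mult_left_mono[of "y\<^sup>2" 4 y] by (simp add: power3_eq_cube power2_eq_square)
  ultimately show ?thesis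
    by linarith
qed

lemma sin_diff_ge:
  assumes "0 \<le> a" "a \<le> x" "x \<le> pi - a"
  shows "(x - a) * (pi - a - x) / 18 \<le> sin x - sin a"
proof -
  have "cos ((x + a) / 2) = sin ((pi - a - x) / 2)"
    by (simp add: cos_sin_eq field_simps)
  then have "sin x - sin a = 2 * sin ((x - a) / 2) * sin ((pi - a - x) / 2)"
    using sin_diff_sin[of x a] by simp
  moreover have "(x - a) / 6 \<le> sin ((x - a) / 2)" "(pi - a - x) / 6 \<le> sin ((pi - a - x) / 2)"
    using sin_ge_third[of "(x - a) / 2"] sin_ge_third[of "(pi - a - x) / 2"] assms by simp_all
  then have "(x - a) / 6 * ((pi - a - x) / 6) \<le> sin ((x - a) / 2) * sin ((pi - a - x) / 2)"
    using assms by (intro mult_mono) auto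
  ultimately show ?thesis
    by simp
qed

lemma ln_c_sin_ge:
  fixes c x :: real
  defines "a \<equiv> arcsin (1 / c)"
  assumes "1 < c" "a \<le> x" "x \<le> pi - a"
  shows "(x - a) * (pi - a - x) / 18 \<le> ln (c * sin x)"
proof -
  have "0 < a"
    unfolding a_def using assms arcsin_less_arcsin[of 0 "1 / c"] by simp
  have "sin a = 1 / c"
    unfolding a_def by (rule sin_arcsin) (use assms in \<open>simp_all add: field_simps\<close>)
  with \<open>0 < a\<close> have "(x - a) * (pi - a - x) / 18 \<le> sin x - 1 / c"
    using sin_diff_ge[of a x] assms by simp
  also have "\<dots> = (c * sin x - 1) / c"
    using assms by (simp add: field_simps)
  finally have bound: "(x - a) * (pi - a - x) / 18 \<le> (c * sin x - 1) / c" .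
  have "0 \<le> (x - a) * (pi - a - x) / 18"
    using assms by simp
  then have "0 \<le> (c * sin x - 1) / c"
    using bound by (rule order_trans)
  then have "1 \<le> c * sin x"
    using assms by (simp add: zero_le_divide_iff)
  note bound
  also have "(c * sin x - 1) / c \<le> (c * sin x - 1) / (c * sin x)"
    using \<open>1 \<le> c * sin x\<close> \<open>1 < c\<close> sin_le_one[of x] by (intro divide_left_mono) auto
  also have "\<dots> \<le> ln (c * sin x)"
    using ln_add1_ge[of "c * sin x - 1"] \<open>1 \<le> c * sin x\<close> by simp
  finally show ?thesis .
qed

lemma one_less_c_sin:
  fixes c x :: real
  defines "a \<equiv> arcsin (1 / c)"
  assumes "1 < c" "a < x" "x < pi - a"
  shows "1 < c * sin x"
proof -
  have "0 < (x - a) * (pi - a - x) / 18"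
    using assms by simp
  also have "\<dots> \<le> ln (c * sin x)"
    using ln_c_sin_ge[of c x] assms by simp
  finally have "0 < ln (c * sin x)" .
  moreover have "0 < sin x"
    using assms arcsin_le_arcsin[of 0 "1 / c"] by (intro sin_gt_zero) (auto simp: a_def)
  ultimately show ?thesis
    using assms by (intro ln_gt_zero_imp_gt_one) auto
qed

lemma isCont_Rminus_integrand:
  assumes "1 < c * sin x"
  shows "isCont (\<lambda>\<psi>. 1 / (1 - (Rminus (c * sin \<psi>))\<^sup>2)) x"
proof -
  have "isCont (\<lambda>\<psi>. c * sin \<psi>) x"
    by (intro continuous_intros)
  then have "isCont (\<lambda>\<psi>. Rminus (c * sin \<psi>)) x"
    using isCont_Rminus[OF assms] by (rule isCont_o2)
  moreover have "(Rminus (c * sin x))\<^sup>2 < 1"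
    using Rminus_root[of "c * sin x"] Rminus_less_one[OF assms] assms by (simp add: power_less_one_iff)
  ultimately show ?thesis
    by (intro continuous_intros) auto
qed

lemma isCont_Rplus_integrand:
  assumes "1 < c * sin x"
  shows "isCont (\<lambda>\<psi>. 1 / ((Rplus (c * sin \<psi>))\<^sup>2 - 1)) x"
proof -
  have "isCont (\<lambda>\<psi>. c * sin \<psi>) x"
    by (intro continuous_intros)
  then have "isCont (\<lambda>\<psi>. Rplus (c * sin \<psi>)) x"
    using isCont_Rplus[OF assms] by (rule isCont_o2)
  moreover have "1 < (Rplus (c * sin x))\<^sup>2"
    using one_less_Rplus[OF assms] by simp
  ultimately show ?thesis
    by (intro continuous_intros) auto
qed

lemma set_integrable_Rminus_integrand:
  fixes c :: real
  defines "a \<equiv> arcsin (1 / c)"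
  assumes "1 < c"
  shows "set_integrable lborel {a<..<pi - a} (\<lambda>\<psi>. 1 / (1 - (Rminus (c * sin \<psi>))\<^sup>2))"
proof (rule set_integrable_bound)
  have "-1 < 1 / c" "1 / c < 1"
    using assms by (simp_all add: field_simps)
  then have "a < pi / 2"
    unfolding a_def using arcsin_lt_bounded by blast
  then show "set_integrable lborel {a<..<pi - a} (\<lambda>x. 2 + sqrt 18 * (1 / sqrt ((x - a) * (pi - a - x))))"
    by (intro set_integral_add(1) set_integrable_const_Ioo set_integrable_mult_right
        set_integrable_inverse_sqrt_Ioo) simp
  show "set_borel_measurable lborel {a<..<pi - a} (\<lambda>\<psi>. 1 / (1 - (Rminus (c * sin \<psi>))\<^sup>2))"
    using one_less_c_sin assms by (intro set_borel_measurable_isCont isCont_Rminus_integrand) auto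
  show "AE x in lborel. x \<in> {a<..<pi - a} \<longrightarrow>
      norm (1 / (1 - (Rminus (c * sin x))\<^sup>2)) \<le> norm (2 + sqrt 18 * (1 / sqrt ((x - a) * (pi - a - x))))"
  proof (intro AE_I2 impI)
    fix x assume "x \<in> {a<..<pi - a}"
    define W where "W = (x - a) * (pi - a - x)"
    have "0 < W" "W / 18 \<le> ln (c * sin x)" "1 < c * sin x"
      using \<open>x \<in> {a<..<pi - a}\<close> ln_c_sin_ge[of c x] one_less_c_sin[of c x] assms
      by (auto simp: W_def)
    have "(Rminus (c * sin x))\<^sup>2 < 1"
      using Rminus_root[of "c * sin x"] Rminus_less_one \<open>1 < c * sin x\<close> by (simp add: power_less_one_iff)
    then have "norm (1 / (1 - (Rminus (c * sin x))\<^sup>2)) = 1 / (1 - (Rminus (c * sin x))\<^sup>2)"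
      by simp
    also have "\<dots> \<le> 2 + 1 / sqrt (ln (c * sin x))"
      using inverse_one_minus_Rminus_sq_le \<open>1 < c * sin x\<close> .
    also have "\<dots> \<le> 2 + 1 / sqrt (W / 18)"
      using \<open>0 < W\<close> \<open>W / 18 \<le> ln (c * sin x)\<close> by (simp add: frac_le)
    also have "\<dots> = norm (2 + sqrt 18 * (1 / sqrt W))"
      using \<open>0 < W\<close> by (simp add: real_sqrt_divide)
    finally show "norm (1 / (1 - (Rminus (c * sin x))\<^sup>2)) \<le> norm (2 + sqrt 18 * (1 / sqrt ((x - a) * (pi - a - x))))"
      by (simp add: W_def)
  qed
qed

lemma Rplus_integral_less_Rminus_integral:
  fixes c \<psi>1 \<psi>2 :: real
  assumes "1 < c" "arcsin (1 / c) \<le> \<psi>1" "\<psi>1 < \<psi>2" "\<psi>2 \<le> pi - arcsin (1 / c)"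
  shows "(LBINT \<psi>=\<psi>1..\<psi>2. 1 / ((Rplus (c * sin \<psi>))\<^sup>2 - 1))
       < (LBINT \<psi>=\<psi>1..\<psi>2. 1 / (1 - (Rminus (c * sin \<psi>))\<^sup>2))"
proof -
  define f where "f \<psi> = 1 / (1 - (Rminus (c * sin \<psi>))\<^sup>2)" for \<psi>
  define g where "g \<psi> = 1 / ((Rplus (c * sin \<psi>))\<^sup>2 - 1)" for \<psi>
  have inside: "1 < c * sin x" if "x \<in> {\<psi>1<..<\<psi>2}" for x
    using that assms one_less_c_sin[of c x] by auto
  have g_less_f: "0 < g x \<and> g x < f x" if "x \<in> {\<psi>1<..<\<psi>2}" for x
  proof -
    have "0 < 1 - (Rminus (c * sin x))\<^sup>2"
      using Rminus_root[of "c * sin x"] Rminus_less_one inside[OF that] by (simp add: power_less_one_iff)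
    then show ?thesis
      using Rminus_Rplus_gap[OF inside[OF that]] by (simp add: f_def g_def frac_less2)
  qed
  have "set_integrable lborel {\<psi>1<..<\<psi>2} f"
    unfolding f_def using assms
    by (intro set_integrable_subset[OF set_integrable_Rminus_integrand]) auto
  moreover have "set_integrable lborel {\<psi>1<..<\<psi>2} g"
  proof (rule set_integrable_bound[OF \<open>set_integrable lborel {\<psi>1<..<\<psi>2} f\<close>])
    show "set_borel_measurable lborel {\<psi>1<..<\<psi>2} g"
      unfolding g_def using inside by (intro set_borel_measurable_isCont isCont_Rplus_integrand) auto
    show "AE x in lborel. x \<in> {\<psi>1<..<\<psi>2} \<longrightarrow> norm (g x) \<le> norm (f x)"
      using g_less_f by (intro AE_I2 impI) fastforce
  qed
  ultimately have "(LINT x:{\<psi>1<..<\<psi>2}|lborel. g x) < (LINT x:{\<psi>1<..<\<psi>2}|lborel. f x)"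
    using g_less_f assms by (intro set_integral_strict_mono) auto
  then show ?thesis
    using assms by (simp add: interval_lebesgue_integral_le_eq f_def g_def)
qed

theorem mainTheorem7:
  shows "(\<forall>x::real. x > 1 \<longrightarrow> 1 - (Rminus x)\<^sup>2 < (Rplus x)\<^sup>2 - 1)
    \<and> (\<forall>c \<psi>1 \<psi>2 :: real. c > 1 \<longrightarrow> arcsin (1 / c) \<le> \<psi>1 \<longrightarrow> \<psi>1 < \<psi>2
         \<longrightarrow> \<psi>2 \<le> pi - arcsin (1 / c) \<longrightarrow>
         (LBINT \<psi>=\<psi>1..\<psi>2. 1 / (1 - (Rminus (c * sin \<psi>))\<^sup>2))
           > (LBINT \<psi>=\<psi>1..\<psi>2. 1 / ((Rplus (c * sin \<psi>))\<^sup>2 - 1)))"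
  using Rminus_Rplus_gap Rplus_integral_less_Rminus_integral by blast

end
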